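(* Let $m$ be a complex number with $\Re(m) > -1$. Then $$\int_0^1 \mathbf{K}\left(\sqrt{x}\right) x^m \, dx = 2 \sum_{i=0}^\infty \frac{\Gamma(m+1)^2}{(2i+1)\,\Gamma(m-i+1)\,\Gamma(m+i+2)},$$ where $1/\Gamma$ is interpreted as the entire function (so terms with $m-i+1$ a non-positive integer vanish).
   Context: $\mathbf{K}$ denotes the complete elliptic integral of the first kind, $\mathbf{K}(k) = \frac{\pi}{2}\, {}_2F_1\!\left(\tfrac12,\tfrac12;1;k^2\right) = \int_0^{\pi/2} \frac{d\theta}{\sqrt{1-k^2\sin^2\theta}}$. The paper writes the right-hand side with factorials, $2\sum_{i\ge 0} \frac{(m!)^2}{(2i+1)(m-i)!(m+i+1)!}$, with $a! = \Gamma(a+1)$. *)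

theory Defs
  imports "HOL-Analysis.Analysis"
begin

definition EllipticK :: "real \<Rightarrow> real" where
  "EllipticK k = integral {0..pi/2} (\<lambda>\<theta>. 1 / sqrt (1 - k\<^sup>2 * (sin \<theta>)\<^sup>2))"

end

theory Submission
  imports Defs
begin

(*
  Write K(sqrt x) as the integral of (1 - x sin^2 b)^(-1/2) over 0 <= b <= pi/2 and integrate in x
  first. For fixed b, with c = cos b and t = (1 - c)/(1 + c) = tan^2(b/2), the substitution
  x = y (1 + (1 - y) t) turns 1 - x sin^2 b into the square (1 - (1 - c) y)^2, and the inner integral
  becomes 2/(1 + c) times the integral of y^m (1 + (1 - y) t)^m over 0 <= y <= 1. Expanding
  (1 + (1 - y) t)^m by the binomial series and integrating termwise gives
  sum_i (m choose i) B(m+1, i+1) t^i. Since tan(b/2) has derivative 1/(1 + cos b), integrating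
  2 t^i/(1 + cos b) over b gives 2/(2i+1), and (m choose i) B(m+1, i+1) equals
  Gamma(m+1)^2 / (Gamma(m-i+1) Gamma(m+i+2)). Both factors of this coefficient are
  O(i^(-Re m - 1)), so for Re m > -1 every interchange of sums and integrals is justified by
  absolute convergence.
*)

(* x^m for real x, written via exp and ln (with the junk value 0 for x <= 0) so that measurability
   is automatic; it agrees with complex_of_real x powr m for x >= 0 by cpowr_eq_powr. *)
definition cpowr :: "complex \<Rightarrow> real \<Rightarrow> complex" where
  "cpowr m x = (if 0 < x then exp (m * of_real (ln x)) else 0)"

lemma borel_measurable_cpowr [measurable]: "cpowr m \<in> borel_measurable borel"
  unfolding cpowr_def by measurable

lemma cpowr_eq_powr: "0 \<le> x \<Longrightarrow> cpowr m x = complex_of_real x powr m"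
  by (auto simp: cpowr_def powr_def Ln_of_real)

lemma norm_cpowr: "norm (cpowr m x) = (if 0 < x then x powr Re m else 0)"
  by (simp add: cpowr_def norm_exp_eq_Re powr_def)

lemma norm_cpowr_nonneg: "0 \<le> x \<Longrightarrow> norm (cpowr m x) = x powr Re m"
  by (simp add: norm_cpowr)

lemma cpowr_times_of_real: "cpowr m x * of_real x = cpowr (m + 1) x"
proof -
  have "0 < x \<Longrightarrow> exp (complex_of_real (ln x)) = of_real x"
    by (metis exp_ln of_real_exp)
  then show ?thesis by (simp add: cpowr_def exp_add distrib_right)
qed

lemma cpowr_mult: "0 < x \<Longrightarrow> 0 < y \<Longrightarrow> cpowr m (x * y) = cpowr m x * cpowr m y"
  by (simp add: cpowr_def ln_mult exp_add[symmetric] distrib_left)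

lemma set_integrable_powr_unit_interval:
  fixes a :: real assumes "a > -1"
  shows "set_integrable lborel {0..1} (\<lambda>x. x powr a)"
proof -
  have "(\<lambda>t. t powr a) integrable_on {0..1}"
    by (rule integrable_on_powr_from_0) (use assms in auto)
  hence "(\<lambda>t. t powr a) absolutely_integrable_on {0..1}"
    by (subst absolutely_integrable_on_iff_nonneg) auto
  then show ?thesis unfolding set_integrable_def
    by (subst (asm) integrable_completion) auto
qed

lemma set_integrable_cpowr_unit_interval:
  assumes "Re m > -1"
  shows "set_integrable lborel {0..1} (cpowr m)"
proof (rule set_integrable_bound[OF set_integrable_powr_unit_interval[OF assms]])
  show "set_borel_measurable lborel {0..1} (cpowr m)"
    unfolding set_borel_measurable_def by measurable
  show "AE x in lborel. x \<in> {0..1} \<longrightarrow> norm (cpowr m x) \<le> norm (x powr Re m)"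
    by (intro AE_I2) (auto simp: norm_cpowr)
qed

lemma has_vector_derivative_of_real_powr:
  fixes s :: complex assumes "0 < x"
  shows "((\<lambda>y. complex_of_real y powr s) has_vector_derivative (s * of_real x powr (s - 1))) (at x)"
proof -
  have "of_real x \<notin> \<real>\<^sub>\<le>\<^sub>0" using assms by (auto simp: complex_nonpos_Reals_iff)
  from has_field_derivative_powr[OF this, of s]
  show ?thesis by (rule has_vector_derivative_real_field)
qed

lemma set_integral_cpowr_unit_interval:
  assumes "Re m > -1"
  shows "(LINT x:{0..1}|lborel. cpowr m x) = 1 / (m + 1)"
proof -
  have m1: "m + 1 \<noteq> 0" using assms by (auto simp: complex_eq_iff)
  define F where "F = (\<lambda>y. complex_of_real y powr (m + 1) / (m + 1))"
  have F_deriv: "(F has_vector_derivative complex_of_real x powr m) (at x)" if "0 < x" for x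
    using has_vector_derivative_divide[OF has_vector_derivative_of_real_powr[OF that, of "m + 1"], of "m + 1"] m1
    by (simp add: F_def)
  have int: "set_integrable lborel (einterval (ereal 0) (ereal 1)) (\<lambda>y. complex_of_real y powr m)"
    using set_integrable_subset[OF set_integrable_cpowr_unit_interval[OF assms], of "einterval (ereal 0) (ereal 1)"]
    by (rule set_integrable_cong[THEN iffD1, rotated -1]) (auto simp: einterval_def cpowr_eq_powr)
  have "(LBINT x=ereal 0..ereal 1. complex_of_real x powr m) = F 1 - F 0"
  proof (rule interval_integral_FTC_integrable[OF _ _ _ int])
    fix x :: real assume "ereal 0 < ereal x" "ereal x < ereal 1"
    then have x0: "0 < x" by simp
    show "(F has_vector_derivative complex_of_real x powr m) (at x)"
      by (rule F_deriv[OF x0])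
    show "isCont (\<lambda>y. complex_of_real y powr m) x"
      by (rule has_vector_derivative_continuous[OF has_vector_derivative_of_real_powr[OF x0]])
  next
    have "((\<lambda>y. norm (F y)) \<longlongrightarrow> 0) (at_right 0)"
    proof (rule Lim_transform_eventually)
      show "((\<lambda>y. y powr (Re m + 1) / norm (m + 1)) \<longlongrightarrow> 0) (at_right 0)"
        using assms m1 by (auto intro!: tendsto_zero_powrI tendsto_eq_intros eventually_at_rightI[of 0 1])
      show "\<forall>\<^sub>F y in at_right 0. y powr (Re m + 1) / norm (m + 1) = norm (F y)"
        using eventually_at_right_less[of "0::real"]
        by eventually_elim (simp add: F_def cpowr_eq_powr[symmetric] norm_divide norm_cpowr)
    qed
    then have "(F \<longlongrightarrow> F 0) (at_right 0)" by (simp add: tendsto_norm_zero_iff F_def)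
    then show "((F \<circ> real_of_ereal) \<longlongrightarrow> F 0) (at_right (ereal 0))"
      by (simp add: ereal_tendsto_simps1)
    have "(F \<longlongrightarrow> F 1) (at_left 1)"
      using has_vector_derivative_continuous[OF F_deriv[of 1]]
      by (rule tendsto_mono[rotated, OF isContD]) (simp_all add: at_le)
    then show "((F \<circ> real_of_ereal) \<longlongrightarrow> F 1) (at_left (ereal 1))"
      by (simp add: ereal_tendsto_simps1)
  qed simp
  also have "F 1 - F 0 = 1 / (m + 1)" by (simp add: F_def)
  also have "(LBINT x=ereal 0..ereal 1. complex_of_real x powr m) = (LINT x:{0..1}|lborel. cpowr m x)"
    by (subst interval_integral_Icc) (auto intro!: set_lebesgue_integral_cong simp: cpowr_eq_powr)
  finally show ?thesis .
qed

lemma pochhammer_plus_one_nonzero: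
  fixes m :: complex assumes "Re m > -1"
  shows "pochhammer (m + 1) n \<noteq> 0"
proof
  assume "pochhammer (m + 1) n = 0"
  then obtain k where "m + 1 = - of_nat k" by (auto simp: pochhammer_eq_0_iff)
  then have "Re (m + 1) = Re (- of_nat k)" by simp
  then have "Re m + 1 = - real k" by simp
  with assms show False by linarith
qed

(* B(a+1, i+1), the integral of x^a (1 - x)^i over 0 <= x <= 1 (cpowr_beta_integral). *)
definition beta_nat :: "'a :: field_char_0 \<Rightarrow> nat \<Rightarrow> 'a" where
  "beta_nat a i = fact i / pochhammer (a + 1) (i + 1)"

lemma beta_nat_Suc:
  fixes m :: complex assumes "Re m > -1"
  shows "beta_nat m (Suc i) = beta_nat m i - beta_nat (m + 1) i"
proof -
  define P where "P = pochhammer (m + 2) i"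
  have nz: "P \<noteq> 0" "m + 1 \<noteq> 0" "m + 2 + of_nat i \<noteq> 0"
    using pochhammer_plus_one_nonzero[of "m + 1" i] assms
    by (auto simp: P_def complex_eq_iff add.assoc)
  have P1: "pochhammer (m + 1) (i + 1) = (m + 1) * P"
    unfolding P_def by (simp add: pochhammer_rec add.assoc)
  have P2: "pochhammer (m + 1 + 1) (i + 1) = P * (m + 2 + of_nat i)"
    unfolding P_def by (simp add: pochhammer_Suc add.assoc)
  have P3: "pochhammer (m + 1) (Suc i + 1) = (m + 1) * (P * (m + 2 + of_nat i))"
    using pochhammer_rec[of "m + 1" "Suc i"] by (simp only: P2 Suc_eq_plus1)
  show ?thesis
    unfolding beta_nat_def P1 P2 P3 using nz
    by (simp add: fact_Suc divide_simps) (simp add: algebra_simps)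
qed

lemma cpowr_beta_integral:
  assumes "Re m > -1"
  shows "set_integrable lborel {0..1} (\<lambda>x. cpowr m x * of_real ((1 - x) ^ i))
       \<and> (LINT x:{0..1}|lborel. cpowr m x * of_real ((1 - x) ^ i)) = beta_nat m i"
  using assms
proof (induction i arbitrary: m)
  case 0
  then show ?case
    using set_integrable_cpowr_unit_interval[OF 0] set_integral_cpowr_unit_interval[OF 0]
    by (simp add: beta_nat_def)
next
  case (Suc i)
  have "Re (m + 1) > -1" using Suc.prems by simp
  note A = Suc.IH[OF Suc.prems] and B = Suc.IH[OF this]
  have eq: "cpowr m x * of_real ((1 - x) ^ Suc i)
      = cpowr m x * of_real ((1 - x) ^ i) - cpowr (m + 1) x * of_real ((1 - x) ^ i)" for x
    unfolding cpowr_times_of_real[symmetric] by (simp add: algebra_simps)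
  show ?case
    unfolding eq beta_nat_Suc[OF Suc.prems] using A B
    by (auto simp: set_integral_diff)
qed

lemma gbinomial_beta_nat_eq_Gamma:
  fixes m :: complex assumes "Re m > -1"
  shows "(m gchoose i) * beta_nat m i
       = Gamma (m + 1) ^ 2 * rGamma (m - of_nat i + 1) * rGamma (m + of_nat i + 2)"
proof -
  have "m + 1 \<notin> \<int>\<^sub>\<le>\<^sub>0" using assms
    by (auto elim!: nonpos_Ints_cases simp: complex_eq_iff)
  then have G: "Gamma (m + 1) * rGamma (m + 1) = 1"
    by (simp add: rGamma_inverse_Gamma Gamma_eq_zero_iff)
  have r1: "rGamma (m - of_nat i + 1) = pochhammer (m - of_nat i + 1) i * rGamma (m + 1)"
    using pochhammer_rGamma[of "m - of_nat i + 1" i] by simp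
  have r2: "rGamma (m + 1) = pochhammer (m + 1) (i + 1) * rGamma (m + of_nat i + 2)"
    using pochhammer_rGamma[of "m + 1" "i + 1"] by (simp add: algebra_simps)
  have "Gamma (m + 1) * rGamma (m + of_nat i + 2) = 1 / pochhammer (m + 1) (i + 1)"
    using G[unfolded r2] pochhammer_plus_one_nonzero[OF assms]
    by (simp add: eq_divide_eq ac_simps)
  moreover have "Gamma (m + 1) ^ 2 * rGamma (m - of_nat i + 1) * rGamma (m + of_nat i + 2)
      = pochhammer (m - of_nat i + 1) i * (Gamma (m + 1) * rGamma (m + 1))
          * (Gamma (m + 1) * rGamma (m + of_nat i + 2))"
    unfolding r1 by (simp add: power2_eq_square algebra_simps)
  ultimately show ?thesis using G
    by (simp add: beta_nat_def gbinomial_pochhammer')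
qed

definition tan_half_sq :: "real \<Rightarrow> real" where
  "tan_half_sq b = (1 - cos b) / (1 + cos b)"

lemma tan_half_sq_nonneg: "0 \<le> tan_half_sq b"
  unfolding tan_half_sq_def
  by (intro divide_nonneg_nonneg) (use cos_ge_minus_one[of b] cos_le_one[of b] in linarith)+

lemma tan_half_sq_less_one: "0 < cos b \<Longrightarrow> tan_half_sq b < 1"
  unfolding tan_half_sq_def by (simp add: divide_simps)

lemma tan_half_sq_eq: "1 + cos b \<noteq> 0 \<Longrightarrow> (sin b / (1 + cos b)) ^ 2 = tan_half_sq b"
proof -
  assume c: "1 + cos b \<noteq> 0"
  have "(sin b / (1 + cos b)) ^ 2 = (1 - cos b) * (1 + cos b) / ((1 + cos b) * (1 + cos b))"
    by (simp add: power_divide power2_eq_square sin_squared_eq[unfolded power2_eq_square] algebra_simps)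
  also have "\<dots> = tan_half_sq b" using c unfolding tan_half_sq_def by simp
  finally show ?thesis .
qed

lemma has_real_derivative_tan_half:
  assumes "1 + cos b \<noteq> 0"
  shows "((\<lambda>b. sin b / (1 + cos b)) has_real_derivative 1 / (1 + cos b)) (at b)"
proof -
  have "((\<lambda>b. sin b / (1 + cos b)) has_real_derivative
          (cos b * (1 + cos b) - sin b * (- sin b)) / ((1 + cos b) * (1 + cos b))) (at b)"
    using assms by (intro derivative_eq_intros refl) (auto simp: power2_eq_square)
  moreover have "cos b * (1 + cos b) - sin b * (- sin b) = 1 + cos b"
    using sin_cos_squared_add[of b] by (simp add: power2_eq_square algebra_simps)
  ultimately show ?thesis using assms by simp
qed

lemma set_integral_tan_half_sq_power:
  "set_integrable lborel {0..pi/2} (\<lambda>b. 2 / (1 + cos b) * tan_half_sq b ^ i)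
   \<and> (LINT b:{0..pi/2}|lborel. 2 / (1 + cos b) * tan_half_sq b ^ i) = 2 / (2 * real i + 1)"
proof -
  have cpos: "0 \<le> cos b" if "b \<in> {0..pi/2}" for b using that by (intro cos_ge_zero) auto
  have cont: "continuous_on {0..pi/2} (\<lambda>b. 2 / (1 + cos b) * tan_half_sq b ^ i)"
    unfolding tan_half_sq_def using cpos by (intro continuous_intros) (auto simp: add_nonneg_eq_0_iff)
  have si: "set_integrable lborel {0..pi/2} (\<lambda>b. 2 / (1 + cos b) * tan_half_sq b ^ i)"
    by (rule borel_integrable_atLeastAtMost'[OF cont])
  define F where "F = (\<lambda>b. 2 * (sin b / (1 + cos b)) ^ (2 * i + 1) / (2 * real i + 1))"
  have "((\<lambda>b. 2 / (1 + cos b) * tan_half_sq b ^ i) has_integral (F (pi/2) - F 0)) {0..pi/2}"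
  proof (rule fundamental_theorem_of_calculus)
    fix b assume "b \<in> {0..pi/2}"
    then have c: "1 + cos b \<noteq> 0" using cpos by fastforce
    have pe: "(sin b / (1 + cos b)) ^ (2 * i) = tan_half_sq b ^ i"
      using tan_half_sq_eq[OF c] by (simp add: power_mult)
    have "(F has_real_derivative
            2 * (of_nat (2 * i + 1) * (1 / (1 + cos b) * tan_half_sq b ^ i)) / (2 * real i + 1)) (at b)"
      unfolding F_def pe[symmetric] using DERIV_power[OF has_real_derivative_tan_half[OF c], of "2 * i + 1"]
      by (intro DERIV_cdivide DERIV_cmult) simp
    then have "(F has_real_derivative 2 / (1 + cos b) * tan_half_sq b ^ i) (at b)"
      by (rule DERIV_cong) (simp add: divide_simps)
    then show "(F has_vector_derivative 2 / (1 + cos b) * tan_half_sq b ^ i) (at b within {0..pi/2})"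
      by (simp add: has_real_derivative_iff_has_vector_derivative[symmetric] has_field_derivative_at_within)
  qed simp
  moreover have "F (pi/2) - F 0 = 2 / (2 * real i + 1)" by (simp add: F_def)
  ultimately have "integral {0..pi/2} (\<lambda>b. 2 / (1 + cos b) * tan_half_sq b ^ i) = 2 / (2 * real i + 1)"
    by (simp add: integral_unique)
  with si set_borel_integral_eq_integral(2)[OF si] show ?thesis by simp
qed

lemma EllipticK_sqrt_eq_set_integral:
  assumes "0 \<le> x" "x < 1"
  shows "EllipticK (sqrt x) = (LINT b:{0..pi/2}|lborel. 1 / sqrt (1 - x * (sin b)\<^sup>2))"
proof -
  have "x * (sin b)\<^sup>2 \<le> x * 1" for b using assms by (intro mult_left_mono) (auto simp: abs_square_le_1)
  then have "1 - x * (sin b)\<^sup>2 > 0" for b using assms(2) by (smt (verit))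
  then have "continuous_on {0..pi/2} (\<lambda>b. 1 / sqrt (1 - x * (sin b)\<^sup>2))"
    by (intro continuous_intros) (auto simp: less_imp_neq[symmetric])
  then show ?thesis
    unfolding EllipticK_def using assms
    by (simp add: set_borel_integral_eq_integral(2)[OF borel_integrable_atLeastAtMost'])
qed

lemma elliptic_kernel_bound:
  assumes "0 \<le> x" "x < 1" "0 \<le> s" "s \<le> 1"
  shows "0 < 1 - x * s" and "1 / sqrt (1 - x * s) \<le> (1 - x) powr (-1/2)"
proof -
  have xs: "x * s \<le> x" using assms by (simp add: mult_left_le)
  then show p: "0 < 1 - x * s" using assms by linarith
  have "1 / sqrt (1 - x * s) \<le> 1 / sqrt (1 - x)"
    using xs assms p by (intro divide_left_mono real_sqrt_le_mono mult_pos_pos) auto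
  also have "\<dots> = (1 - x) powr (-1/2)"
    using assms by (simp add: powr_minus_divide powr_half_sqrt)
  finally show "1 / sqrt (1 - x * s) \<le> (1 - x) powr (-1/2)" .
qed

lemma set_integrable_cpowr_elliptic_kernel:
  assumes "Re m > -1" "0 \<le> s" "s \<le> 1"
  shows "set_integrable lborel {0..1} (\<lambda>x. cpowr m x * of_real (1 / sqrt (1 - x * s)))"
proof (rule set_integrable_bound)
  show "set_integrable lborel {0..1} (\<lambda>x. x powr Re m * (1 - x) powr (-1/2))"
    using integrable_Beta[of "Re m + 1" "1/2"] assms(1) by simp
  show "set_borel_measurable lborel {0..1} (\<lambda>x. cpowr m x * of_real (1 / sqrt (1 - x * s)))"
    unfolding set_borel_measurable_def by measurable
  show "AE x in lborel. x \<in> {0..1} \<longrightarrow> norm (cpowr m x * of_real (1 / sqrt (1 - x * s)))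
          \<le> norm (x powr Re m * (1 - x) powr (-1/2))"
    using AE_lborel_singleton[of 1]
  proof eventually_elim
    case (elim x)
    show ?case
    proof
      assume "x \<in> {0..1}"
      with elim have x: "0 \<le> x" "x < 1" by auto
      note bound = elliptic_kernel_bound[OF x assms(2,3)]
      have "norm (cpowr m x * of_real (1 / sqrt (1 - x * s))) = x powr Re m * (1 / sqrt (1 - x * s))"
        using x bound(1) by (simp add: norm_mult norm_divide norm_cpowr_nonneg)
      also have "\<dots> \<le> x powr Re m * (1 - x) powr (-1/2)"
        using bound(2) by (intro mult_left_mono) auto
      finally show "norm (cpowr m x * of_real (1 / sqrt (1 - x * s)))
          \<le> norm (x powr Re m * (1 - x) powr (-1/2))" by simp
    qed
  qed
qed

lemma set_integrable_cpowr_times_cpowr_shift: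
  assumes "Re m > -1" "0 \<le> T" "T \<le> 1"
  shows "set_integrable lborel {0..1} (\<lambda>y. cpowr m y * cpowr m (1 + (1 - y) * T))"
proof (rule set_integrable_bound)
  show "set_integrable lborel {0..1} (\<lambda>y. 2 powr \<bar>Re m\<bar> * y powr Re m)"
    using set_integrable_powr_unit_interval[OF assms(1)] by simp
  show "set_borel_measurable lborel {0..1} (\<lambda>y. cpowr m y * cpowr m (1 + (1 - y) * T))"
    unfolding set_borel_measurable_def by measurable
  show "AE y in lborel. y \<in> {0..1} \<longrightarrow> norm (cpowr m y * cpowr m (1 + (1 - y) * T))
          \<le> norm (2 powr \<bar>Re m\<bar> * y powr Re m)"
  proof (intro AE_I2 impI)
    fix y :: real assume y: "y \<in> {0..1}"
    define w where "w = 1 + (1 - y) * T"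
    have w: "1 \<le> w" "w \<le> 2" using y assms unfolding w_def by (auto simp: mult_le_one)
    have "w powr Re m \<le> w powr \<bar>Re m\<bar>" using w by (intro powr_mono) auto
    also have "\<dots> \<le> 2 powr \<bar>Re m\<bar>" using w by (intro powr_mono2) auto
    finally have "y powr Re m * w powr Re m \<le> y powr Re m * 2 powr \<bar>Re m\<bar>"
      by (intro mult_left_mono) auto
    then show "norm (cpowr m y * cpowr m (1 + (1 - y) * T)) \<le> norm (2 powr \<bar>Re m\<bar> * y powr Re m)"
      using y w unfolding w_def[symmetric] by (simp add: norm_mult norm_cpowr_nonneg mult.commute)
  qed
qed

lemma tan_half_substitution_identities:
  fixes c y T :: real assumes "1 + c \<noteq> 0" "T = (1 - c) / (1 + c)"
  shows "1 - y * (1 + (1 - y) * T) * (1 - c\<^sup>2) = (1 - (1 - c) * y)\<^sup>2"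
    and "1 + T - 2 * T * y = 2 * (1 - (1 - c) * y) / (1 + c)"
proof -
  show "1 - y * (1 + (1 - y) * T) * (1 - c\<^sup>2) = (1 - (1 - c) * y)\<^sup>2"
    using assms(1) unfolding assms(2) by (simp add: field_simps power2_eq_square)
  have "T * (1 + c) = 1 - c" using assms by simp
  then have "(1 + T - 2 * T * y) * (1 + c) = 2 * (1 - (1 - c) * y)" by algebra
  then show "1 + T - 2 * T * y = 2 * (1 - (1 - c) * y) / (1 + c)"
    using assms(1) by (simp add: eq_divide_eq)
qed

lemma cpowr_elliptic_kernel_substitution:
  assumes m: "Re m > -1" and b: "0 \<le> b" "b < pi/2"
  shows "(LINT x:{0..1}|lborel. cpowr m x * of_real (1 / sqrt (1 - x * (sin b)\<^sup>2)))
       = of_real (2 / (1 + cos b)) * (LINT y:{0..1}|lborel. cpowr m y * cpowr m (1 + (1 - y) * tan_half_sq b))"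
proof -
  define c where "c = cos b"
  define T where "T = tan_half_sq b"
  have c: "0 < c" "c \<le> 1" unfolding c_def using b by (auto intro!: cos_gt_zero_pi)
  have T: "0 \<le> T" "T < 1" unfolding T_def c_def using c tan_half_sq_nonneg tan_half_sq_less_one
    by (auto simp: c_def)
  have ident: "1 - y * (1 + (1 - y) * T) * (1 - c\<^sup>2) = (1 - (1 - c) * y)\<^sup>2"
    "1 + T - 2 * T * y = 2 * (1 - (1 - c) * y) / (1 + c)" for y
    using tan_half_substitution_identities[of c T y] c by (simp_all add: T_def c_def tan_half_sq_def)
  define g where "g = (\<lambda>y::real. y * (1 + (1 - y) * T))"
  define g' where "g' = (\<lambda>y::real. 1 + T - 2 * T * y)"
  define f where "f = (\<lambda>x::real. complex_of_real x powr m * of_real (1 / sqrt (1 - x * (sin b)\<^sup>2)))"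
  define H where "H = (\<lambda>y::real. of_real (2 / (1 + c)) * (cpowr m y * cpowr m (1 + (1 - y) * T)))"
  have lin: "0 < 1 - (1 - c) * y" if "y \<le> 1" for y
    using mult_left_mono[OF that, of "1 - c"] c by simp
  have g_pos: "0 < g y" if "y \<in> {0<..<1}" for y
    using that T unfolding g_def by (intro mult_pos_pos add_pos_nonneg) auto
  have radicand: "1 - g y * (sin b)\<^sup>2 = (1 - (1 - c) * y)\<^sup>2" for y
    unfolding g_def sin_squared_eq c_def[symmetric] by (rule ident(1))
  have key: "g' y *\<^sub>R f (g y) = H y" if y: "y \<in> {0<..<1}" for y
  proof -
    have "f (g y) = cpowr m (g y) * of_real (1 / (1 - (1 - c) * y))"
      unfolding f_def radicand using g_pos[OF y] lin[of y] y by (simp add: cpowr_eq_powr)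
    also have "cpowr m (g y) = cpowr m y * cpowr m (1 + (1 - y) * T)"
      unfolding g_def using y T by (intro cpowr_mult) (auto intro: add_pos_nonneg)
    finally have "g' y *\<^sub>R f (g y)
        = of_real (g' y * (1 / (1 - (1 - c) * y))) * (cpowr m y * cpowr m (1 + (1 - y) * T))"
      by (simp add: scaleR_conv_of_real mult_ac)
    also have "g' y * (1 / (1 - (1 - c) * y)) = 2 / (1 + c)"
      unfolding g'_def ident(2) using lin[of y] y c by (simp add: divide_simps)
    finally show ?thesis unfolding H_def .
  qed
  have H_int: "set_integrable lborel {0..1} H"
    unfolding H_def using set_integrable_cpowr_times_cpowr_shift[OF m T(1)] T(2)
    by (intro set_integrable_mult_right) auto
  have f_int: "set_integrable lborel {0..1} f"
    using set_integrable_cpowr_elliptic_kernel[OF m, of "(sin b)\<^sup>2"] unfolding f_def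
    by (rule set_integrable_cong[THEN iffD1, rotated -1]) (auto simp: cpowr_eq_powr abs_square_le_1)
  have subst: "(LBINT x=ereal 0..ereal 1. f x) = (LBINT x=ereal 0..ereal 1. g' x *\<^sub>R f (g x))"
  proof (rule interval_integral_substitution_integrable)
    fix x assume "ereal 0 < ereal x" "ereal x < ereal 1"
    then have x: "x \<in> {0<..<1}" by simp
    show "(g has_real_derivative g' x) (at x)"
      unfolding g_def g'_def by (auto intro!: derivative_eq_intros simp: algebra_simps)
    show "isCont g' x" unfolding g'_def by (intro continuous_intros)
    have "0 < 1 - g x * (sin b)\<^sup>2" unfolding radicand using lin[of x] x by simp
    then show "isCont f (g x)" unfolding f_def
      by (intro continuous_mult has_vector_derivative_continuous[OF has_vector_derivative_of_real_powr]
          g_pos[OF x] continuous_intros) auto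
  next
    fix x assume "ereal 0 \<le> ereal x" "ereal x \<le> ereal 1"
    then show "0 \<le> g' x" unfolding g'_def ident(2)[of x] using lin[of x] c by simp
  next
    have "(g \<longlongrightarrow> g 0) (at_right 0)" "(g \<longlongrightarrow> g 1) (at_left 1)"
      unfolding g_def by (intro tendsto_intros)+
    then have "(((\<lambda>x. ereal (g x)) \<circ> real_of_ereal) \<longlongrightarrow> ereal 0) (at_right (ereal 0))"
      "(((\<lambda>x. ereal (g x)) \<circ> real_of_ereal) \<longlongrightarrow> ereal 1) (at_left (ereal 1))"
      unfolding ereal_tendsto_simps1 by (auto intro!: tendsto_ereal simp: g_def)
    then show "((ereal \<circ> g \<circ> real_of_ereal) \<longlongrightarrow> ereal 0) (at_right (ereal 0))"
      "((ereal \<circ> g \<circ> real_of_ereal) \<longlongrightarrow> ereal 1) (at_left (ereal 1))"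
      by (simp_all add: o_def)
  next
    show "set_integrable lborel (einterval (ereal 0) (ereal 1)) (\<lambda>x. g' x *\<^sub>R f (g x))"
      using set_integrable_subset[OF H_int, of "{0<..<1}"]
      by (simp, rule set_integrable_cong[THEN iffD1, rotated -1]) (auto simp: key)
    show "set_integrable lborel (einterval (ereal 0) (ereal 1)) f"
      by (simp, rule set_integrable_subset[OF f_int]) auto
  qed simp
  have "(LINT x:{0..1}|lborel. cpowr m x * of_real (1 / sqrt (1 - x * (sin b)\<^sup>2)))
      = (LINT x:{0..1}|lborel. f x)"
    unfolding f_def by (rule set_lebesgue_integral_cong) (auto simp: cpowr_eq_powr)
  also have "\<dots> = (LBINT x=ereal 0..ereal 1. g' x *\<^sub>R f (g x))"
    by (simp add: interval_integral_Icc flip: subst)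
  also have "\<dots> = (LINT y:{0<..<1}|lborel. H y)"
    by (simp add: interval_integral_Ioo set_lebesgue_integral_cong key)
  also have "\<dots> = (LINT y:{0..1}|lborel. H y)"
    using interval_integral_Ioo[of "ereal 0" "ereal 1" H] interval_integral_Icc[of 0 1 H] by simp
  finally show ?thesis unfolding H_def c_def T_def by simp
qed

lemma pochhammer_Re_le_norm_pochhammer:
  fixes z :: complex assumes "0 \<le> Re z"
  shows "pochhammer (Re z) n \<le> norm (pochhammer z n)"
proof (induction n)
  case (Suc n)
  have "Re z + real n \<le> norm (z + of_nat n)"
    using complex_Re_le_cmod[of "z + of_nat n"] by simp
  with Suc assms show ?case
    by (simp add: pochhammer_Suc norm_mult mult_mono pochhammer_nonneg)
qed simp

lemma beta_nat_pos: "a > -1 \<Longrightarrow> 0 < beta_nat (a :: real) i"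
  unfolding beta_nat_def by (intro divide_pos_pos) (auto intro!: pochhammer_pos)

lemma norm_beta_nat_le:
  fixes m :: complex assumes "Re m > -1"
  shows "norm (beta_nat m i) \<le> beta_nat (Re m) i"
proof -
  have "pochhammer (Re m + 1) (i + 1) \<le> norm (pochhammer (m + 1) (i + 1))"
    using pochhammer_Re_le_norm_pochhammer[of "m + 1"] assms by simp
  moreover have "0 < pochhammer (Re m + 1) (i + 1)" using assms by (intro pochhammer_pos) auto
  ultimately show ?thesis
    unfolding beta_nat_def norm_divide norm_fact by (intro divide_left_mono mult_pos_pos) auto
qed

lemma beta_nat_le: "a > -1 \<Longrightarrow> beta_nat (a :: real) i \<le> 1 / (a + 1)"
proof (induction i)
  case (Suc i)
  have "pochhammer (a + 1) (Suc i) > 0" using Suc.prems by (intro pochhammer_pos) auto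
  then have "beta_nat a (Suc i) = beta_nat a i * ((real i + 1) / (a + real i + 2))"
    unfolding beta_nat_def using Suc.prems
    by (simp add: pochhammer_Suc[of _ "Suc i"] fact_Suc field_simps)
  also have "\<dots> \<le> beta_nat a i"
    using beta_nat_pos[OF Suc.prems, of i] Suc.prems by (intro mult_left_le) auto
  finally show ?case using Suc by simp
qed (simp add: beta_nat_def)

lemma norm_pochhammer_eq_rGamma_series:
  fixes z :: complex assumes "n > 0"
  shows "norm (pochhammer z (n + 1)) = norm (rGamma_series z n) * fact n * real n powr Re z"
  using assms by (simp add: rGamma_series_def norm_divide norm_mult norm_exp_eq_Re powr_def)

lemma pochhammer_eq_rGamma_series:
  fixes z :: real assumes "n > 0"
  shows "pochhammer z (n + 1) = rGamma_series z n * fact n * real n powr z"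
  using assms by (simp add: rGamma_series_def powr_def)

lemma gchoose_bound:
  fixes m :: complex
  shows "\<exists>C. \<forall>\<^sub>F i in sequentially. norm (m gchoose i) \<le> C * real i powr (- Re m - 1)"
proof -
  have "Bseq (rGamma_series (-m))"
    using rGamma_series_LIMSEQ by (blast intro: convergent_imp_Bseq convergentI)
  then obtain M where M: "M > 0" "\<And>n. norm (rGamma_series (-m) n) \<le> M"
    unfolding Bseq_def by blast
  have "\<forall>\<^sub>F i in sequentially. norm (m gchoose i) \<le> (2 * M) * real i powr (- Re m - 1)"
    using eventually_ge_at_top[of "nat \<lceil>2 * norm m\<rceil> + 1"]
  proof eventually_elim
    case (elim i)
    then have i0: "i > 0" and "real i \<ge> 2 * norm m" by linarith+
    moreover have "norm (of_nat i - m) \<ge> real i - norm m"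
      by (metis norm_of_nat norm_triangle_ineq2)
    ultimately have "real i / 2 \<le> norm (of_nat i - m)" by linarith
    then have "norm (pochhammer (-m) i) * (real i / 2) \<le> norm (pochhammer (-m) i) * norm (of_nat i - m)"
      by (intro mult_left_mono) auto
    also have "\<dots> = norm (rGamma_series (-m) i) * fact i * real i powr (- Re m)"
      using norm_pochhammer_eq_rGamma_series[OF i0, of "-m"] by (simp add: pochhammer_Suc norm_mult)
    also have "\<dots> \<le> M * fact i * real i powr (- Re m)"
      using M(2)[of i] by (intro mult_right_mono) auto
    finally have "norm (pochhammer (-m) i) \<le> 2 * M * fact i * real i powr (- Re m) / real i"
      using i0 by (simp add: field_simps)
    also have "\<dots> = 2 * M * fact i * real i powr (- Re m - 1)"
      using i0 by (simp add: powr_diff)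
    finally show ?case
      by (simp add: gbinomial_pochhammer norm_mult norm_divide norm_power field_simps)
  qed
  then show ?thesis by blast
qed

lemma beta_nat_bound:
  fixes a :: real assumes "a > -1"
  shows "\<exists>C. \<forall>\<^sub>F i in sequentially. beta_nat a i \<le> C * real i powr (- a - 1)"
proof -
  have r0: "rGamma (a + 1) > 0" using assms by (simp add: rGamma_inverse_Gamma Gamma_real_pos)
  then have ev: "\<forall>\<^sub>F i in sequentially. rGamma_series (a + 1) i > rGamma (a + 1) / 2"
    by (intro order_tendstoD(1)[OF rGamma_series_LIMSEQ]) auto
  have "\<forall>\<^sub>F i in sequentially. beta_nat a i \<le> (2 / rGamma (a + 1)) * real i powr (- a - 1)"
    using ev eventually_gt_at_top[of "0::nat"]
  proof eventually_elim
    case (elim i)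
    have "beta_nat a i = 1 / (rGamma_series (a + 1) i * real i powr (a + 1))"
      using pochhammer_eq_rGamma_series[OF elim(2), of "a + 1"] by (simp add: beta_nat_def)
    also have "\<dots> \<le> 1 / ((rGamma (a + 1) / 2) * real i powr (a + 1))"
      using elim r0 by (intro divide_left_mono mult_pos_pos mult_right_mono) auto
    also have "\<dots> = (2 / rGamma (a + 1)) * real i powr (- a - 1)"
    proof -
      have "real i powr (- a - 1) = inverse (real i powr (a + 1))"
        by (subst powr_minus[symmetric]) simp
      then show ?thesis by (simp add: divide_simps)
    qed
    finally show ?case .
  qed
  then show ?thesis by blast
qed

(* Each of the first two factors is only O(i^(-Re m - 1)), so the factor 1/(2i+1) is needed. *)
lemma summable_gchoose_beta_nat:
  fixes m :: complex assumes "Re m > -1"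
  shows "summable (\<lambda>i. norm (m gchoose i) * beta_nat (Re m) i / real (2 * i + 1))"
proof -
  obtain C1 where C1: "\<forall>\<^sub>F i in sequentially. norm (m gchoose i) \<le> C1 * real i powr (- Re m - 1)"
    using gchoose_bound by blast
  obtain C2 where C2: "\<forall>\<^sub>F i in sequentially. beta_nat (Re m) i \<le> C2 * real i powr (- Re m - 1)"
    using beta_nat_bound assms by blast
  show ?thesis
  proof (rule summable_comparison_test_ev)
  show "summable (\<lambda>i. (C1 * C2) * real i powr (-2 * Re m - 3))"
    using assms by (intro summable_mult) (simp add: summable_real_powr_iff)
  show "\<forall>\<^sub>F i in sequentially. norm (norm (m gchoose i) * beta_nat (Re m) i / real (2 * i + 1))
         \<le> (C1 * C2) * real i powr (-2 * Re m - 3)"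
    using C1 C2 eventually_gt_at_top[of "0::nat"]
  proof eventually_elim
    case (elim i)
    have bp: "beta_nat (Re m) i > 0" using beta_nat_pos assms by blast
    have n1: "0 \<le> C1 * real i powr (- Re m - 1)" by (rule order_trans[OF norm_ge_zero elim(1)])
    have n2: "0 \<le> C2 * real i powr (- Re m - 1)" using elim(2) bp by linarith
    have "norm (norm (m gchoose i) * beta_nat (Re m) i / real (2 * i + 1))
         = norm (m gchoose i) * beta_nat (Re m) i / real (2 * i + 1)" using bp by simp
    also have "\<dots> \<le> (C1 * real i powr (- Re m - 1)) * (C2 * real i powr (- Re m - 1)) / real i"
    proof (rule frac_le)
      show "0 \<le> C1 * real i powr (- Re m - 1) * (C2 * real i powr (- Re m - 1))"
        using n1 n2 by simp
      show "norm (m gchoose i) * beta_nat (Re m) i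
          \<le> C1 * real i powr (- Re m - 1) * (C2 * real i powr (- Re m - 1))"
        using elim bp n1 by (intro mult_mono) auto
    qed (use elim in auto)
    also have "\<dots> = (C1 * C2) * real i powr (-2 * Re m - 3)"
    proof -
      have "real i powr (-2 * Re m - 3) = real i powr ((-Re m - 1) + (-Re m - 1) - 1)"
        by (intro arg_cong2[where f="(powr)"]) auto
      also have "\<dots> = real i powr (-Re m - 1) * real i powr (-Re m - 1) / real i"
        using elim by (simp only: powr_diff powr_add) simp
      finally show ?thesis by simp
    qed
    finally show ?case .
  qed
  qed
qed

lemma summable_gchoose_geometric:
  fixes m :: complex assumes "Re m > -1" "0 \<le> r" "r < 1"
  shows "summable (\<lambda>i. norm (m gchoose i) * r ^ i)"
proof -
  obtain C where C: "\<forall>\<^sub>F i in sequentially. norm (m gchoose i) \<le> C * real i powr (- Re m - 1)"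
    using gchoose_bound by blast
  show ?thesis
  proof (rule summable_comparison_test_ev)
  show "summable (\<lambda>i. \<bar>C\<bar> * r ^ i)" using assms by (intro summable_mult summable_geometric) auto
  show "\<forall>\<^sub>F i in sequentially. norm (norm (m gchoose i) * r ^ i) \<le> \<bar>C\<bar> * r ^ i"
    using C eventually_gt_at_top[of "0::nat"]
  proof eventually_elim
    case (elim i)
    have "real i powr (- Re m - 1) \<le> real i powr 0"
      using elim assms by (intro powr_mono) auto
    then have "real i powr (- Re m - 1) \<le> 1"
      using elim by simp
    have "C * real i powr (- Re m - 1) \<le> \<bar>C\<bar> * real i powr (- Re m - 1)"
      by (intro mult_right_mono) auto
    also have "\<dots> \<le> \<bar>C\<bar>"
      using \<open>real i powr (- Re m - 1) \<le> 1\<close> by (intro mult_left_le) auto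
    finally have "norm (m gchoose i) \<le> \<bar>C\<bar>" using elim(1) by linarith
    then show ?case using assms by (simp add: mult_right_mono)
  qed
  qed
qed

lemma binomial_series_cpowr_integral:
  assumes m: "Re m > -1" and T: "0 \<le> T" "T < 1"
  shows "(\<lambda>i. (m gchoose i) * beta_nat m i * of_real T ^ i) sums
           (LINT y:{0..1}|lborel. cpowr m y * cpowr m (1 + (1 - y) * T))"
proof -
  define h where "h = (\<lambda>i y. indicator {0..1} y *\<^sub>R (cpowr m y * of_real ((1 - y) ^ i)))"
  define f where "f = (\<lambda>i y. ((m gchoose i) * of_real T ^ i) * h i y)"
  have h_int: "integrable lborel (h i)" and h_val: "integral\<^sup>L lborel (h i) = beta_nat m i" for i
    using cpowr_beta_integral[OF m, of i]
    unfolding h_def set_integrable_def set_lebesgue_integral_def by auto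
  have f_int: "integrable lborel (f i)" for i
    unfolding f_def by (intro integrable_mult_right h_int)
  have f_eq: "f i y = indicator {0..1} y *\<^sub>R (cpowr m y * ((m gchoose i) * of_real ((1 - y) * T) ^ i))"
    for i y unfolding f_def h_def by (simp add: power_mult_distrib mult_ac)
  have ratio: "0 \<le> (1 - y) * T" "(1 - y) * T < 1" if "y \<in> {0..1}" for y
    using that T mult_left_le_one_le[of T "1 - y"] by auto
  have norm_f: "norm (f i y) = indicator {0..1} y * (norm (cpowr m y) * (norm (m gchoose i) * ((1 - y) * T) ^ i))"
    for i y
  proof (cases "y \<in> {0..1}")
    case True
    then show ?thesis
      unfolding f_eq using ratio[OF True] by (simp add: norm_mult norm_power del: of_real_mult)
  qed (simp add: f_eq)
  have "AE y in lborel. summable (\<lambda>i. norm (f i y))"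
  proof (intro AE_I2)
    fix y :: real
    show "summable (\<lambda>i. norm (f i y))"
    proof (cases "y \<in> {0..1}")
      case True
      then show ?thesis
        unfolding norm_f by (intro summable_mult summable_gchoose_geometric[OF m] ratio)
    qed (simp add: norm_f)
  qed
  moreover have "summable (\<lambda>i. \<integral>y. norm (f i y) \<partial>lborel)"
  proof (rule summable_comparison_test)
    define K where "K = (\<integral>y. indicator {0..1} y * norm (cpowr m y) \<partial>lborel)"
    have K_int: "integrable lborel (\<lambda>y. indicator {0..1} y * norm (cpowr m y))"
      using set_integrable_norm[OF set_integrable_cpowr_unit_interval[OF m]]
      unfolding set_integrable_def by simp
    have "(\<integral>y. norm (f i y) \<partial>lborel)
        \<le> (\<integral>y. norm (m gchoose i) * T ^ i * (indicator {0..1} y * norm (cpowr m y)) \<partial>lborel)" for i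
    proof (rule integral_mono)
      fix y :: real
      have "norm (cpowr m y) * (norm (m gchoose i) * ((1 - y) * T) ^ i)
          \<le> norm (cpowr m y) * (norm (m gchoose i) * T ^ i)" if "y \<in> {0..1}"
        using that T by (intro mult_left_mono power_mono) (auto simp: mult_left_le_one_le)
      then show "norm (f i y) \<le> norm (m gchoose i) * T ^ i * (indicator {0..1} y * norm (cpowr m y))"
        unfolding norm_f by (auto simp: indicator_def mult_ac)
    qed (use f_int K_int in auto)
    also have "(\<integral>y. norm (m gchoose i) * T ^ i * (indicator {0..1} y * norm (cpowr m y)) \<partial>lborel)
        = K * (norm (m gchoose i) * T ^ i)" for i
      unfolding K_def integral_mult_right_zero by (simp only: mult_ac)
    finally show "\<exists>N. \<forall>n\<ge>N. norm (\<integral>y. norm (f n y) \<partial>lborel) \<le> K * (norm (m gchoose n) * T ^ n)"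
      by auto
    show "summable (\<lambda>n. K * (norm (m gchoose n) * T ^ n))"
      by (intro summable_mult summable_gchoose_geometric[OF m T])
  qed
  ultimately have "(\<lambda>i. integral\<^sup>L lborel (f i)) sums (\<integral>y. (\<Sum>i. f i y) \<partial>lborel)"
    by (rule sums_integral[OF f_int])
  moreover have "(\<Sum>i. f i y) = indicator {0..1} y *\<^sub>R (cpowr m y * cpowr m (1 + (1 - y) * T))" for y
  proof (cases "y \<in> {0..1}")
    case True
    have "norm (complex_of_real ((1 - y) * T)) < 1"
      using ratio[OF True] by (simp only: norm_of_real abs_of_nonneg)
    from sums_mult[OF gen_binomial_complex[OF this], of "cpowr m y"]
    show ?thesis using True ratio[OF True] unfolding f_eq by (simp add: sums_iff cpowr_eq_powr)
  qed (simp add: f_eq)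
  ultimately show ?thesis
    by (simp add: f_def h_val set_lebesgue_integral_def mult_ac)
qed

lemma cpowr_elliptic_kernel_integral_sums:
  assumes m: "Re m > -1" and b: "0 \<le> b" "b < pi/2"
  shows "(\<lambda>i. (m gchoose i) * beta_nat m i * of_real (2 / (1 + cos b) * tan_half_sq b ^ i)) sums
           (LINT x:{0..1}|lborel. cpowr m x * of_real (1 / sqrt (1 - x * (sin b)\<^sup>2)))"
proof -
  have "0 < cos b" using b by (intro cos_gt_zero_pi) auto
  then have "0 \<le> tan_half_sq b" "tan_half_sq b < 1"
    by (simp_all add: tan_half_sq_nonneg tan_half_sq_less_one)
  from sums_mult[OF binomial_series_cpowr_integral[OF m this], of "of_real (2 / (1 + cos b))"]
  show ?thesis unfolding cpowr_elliptic_kernel_substitution[OF m b] by (simp add: mult_ac)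
qed

lemma summable_norm_gchoose_beta_nat_geometric:
  fixes m :: complex assumes "Re m > -1" "0 \<le> t" "t < 1"
  shows "summable (\<lambda>i. norm ((m gchoose i) * beta_nat m i) * t ^ i)"
proof (rule summable_comparison_test)
  show "summable (\<lambda>i. 1 / (Re m + 1) * (norm (m gchoose i) * t ^ i))"
    using assms by (intro summable_mult summable_gchoose_geometric)
  have "norm ((m gchoose i) * beta_nat m i) \<le> norm (m gchoose i) * (1 / (Re m + 1))" for i
    unfolding norm_mult using assms
    by (intro mult_left_mono order_trans[OF norm_beta_nat_le beta_nat_le]) auto
  then have "norm ((m gchoose i) * beta_nat m i) * t ^ i \<le> norm (m gchoose i) * (1 / (Re m + 1)) * t ^ i"
    for i using assms by (intro mult_right_mono) auto
  then show "\<exists>N. \<forall>i\<ge>N. norm (norm ((m gchoose i) * beta_nat m i) * t ^ i)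
      \<le> 1 / (Re m + 1) * (norm (m gchoose i) * t ^ i)"
    using assms by (simp add: mult_ac)
qed

lemma summable_norm_gchoose_beta_nat_moment:
  fixes m :: complex assumes "Re m > -1"
  shows "summable (\<lambda>i. norm ((m gchoose i) * beta_nat m i) * (2 / (2 * real i + 1)))"
proof (rule summable_comparison_test)
  show "summable (\<lambda>i. 2 * (norm (m gchoose i) * beta_nat (Re m) i / real (2 * i + 1)))"
    by (intro summable_mult summable_gchoose_beta_nat assms)
  have "norm ((m gchoose i) * beta_nat m i) * (2 / (2 * real i + 1))
      = 2 * (norm (m gchoose i) * norm (beta_nat m i) / real (2 * i + 1))" for i
    by (simp add: norm_mult add.commute)
  also have "\<dots> i \<le> 2 * (norm (m gchoose i) * beta_nat (Re m) i / real (2 * i + 1))" for i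
    by (intro mult_left_mono divide_right_mono norm_beta_nat_le assms) auto
  finally have "norm ((m gchoose i) * beta_nat m i) * (2 / (2 * real i + 1))
      \<le> 2 * (norm (m gchoose i) * beta_nat (Re m) i / real (2 * i + 1))" for i .
  then show "\<exists>N. \<forall>n\<ge>N. norm (norm ((m gchoose n) * beta_nat m n) * (2 / (2 * real n + 1)))
      \<le> 2 * (norm (m gchoose n) * beta_nat (Re m) n / real (2 * n + 1))"
    by simp
qed

lemma set_integral_elliptic_kernel_le:
  assumes "0 \<le> x" "x < 1"
  shows "set_integrable lborel {0..pi/2} (\<lambda>b. 1 / sqrt (1 - x * (sin b)\<^sup>2))"
    and "(LINT b:{0..pi/2}|lborel. 1 / sqrt (1 - x * (sin b)\<^sup>2)) \<le> pi / 2 * (1 - x) powr (-1/2)"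
proof -
  note bound = elliptic_kernel_bound[OF assms zero_le_power2 abs_square_le_1[THEN iffD2]]
  have "continuous_on {0..pi/2} (\<lambda>b. 1 / sqrt (1 - x * (sin b)\<^sup>2))"
    using bound(1) by (intro continuous_intros) (auto simp: less_imp_neq[symmetric])
  then show int: "set_integrable lborel {0..pi/2} (\<lambda>b. 1 / sqrt (1 - x * (sin b)\<^sup>2))"
    by (rule borel_integrable_atLeastAtMost')
  have "(LINT b:{0..pi/2}|lborel. 1 / sqrt (1 - x * (sin b)\<^sup>2)) \<le> (LINT b:{0..pi/2}|lborel. (1 - x) powr (-1/2))"
    using bound(2) by (intro set_integral_mono int borel_integrable_atLeastAtMost' continuous_intros) auto
  then show "(LINT b:{0..pi/2}|lborel. 1 / sqrt (1 - x * (sin b)\<^sup>2)) \<le> pi / 2 * (1 - x) powr (-1/2)"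
    by (simp add: set_lebesgue_integral_def)
qed

definition elliptic_integrand :: "complex \<Rightarrow> real \<Rightarrow> real \<Rightarrow> complex" where
  "elliptic_integrand m x b = (indicator {0..1} x * indicator {0..pi/2} b) *\<^sub>R
       (cpowr m x * of_real (1 / sqrt (1 - x * (sin b)\<^sup>2)))"

lemma borel_measurable_elliptic_integrand [measurable]:
  "(\<lambda>(x, b). elliptic_integrand m x b) \<in> borel_measurable (lborel \<Otimes>\<^sub>M lborel)"
  unfolding elliptic_integrand_def by measurable

lemma elliptic_integrand_eq_0: "x \<notin> {0..1} \<Longrightarrow> elliptic_integrand m x b = 0"
  unfolding elliptic_integrand_def by simp

lemma elliptic_integrand_x_section:
  assumes "0 \<le> x" "x < 1"
  shows "integrable lborel (elliptic_integrand m x)"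
    and "(\<integral>b. elliptic_integrand m x b \<partial>lborel) = cpowr m x * of_real (EllipticK (sqrt x))"
    and "(\<integral>b. norm (elliptic_integrand m x b) \<partial>lborel) \<le> x powr Re m * (pi / 2 * (1 - x) powr (-1/2))"
proof -
  define k where "k = (\<lambda>b. indicator {0..pi/2} b * (1 / sqrt (1 - x * (sin b)\<^sup>2)))"
  have slice: "elliptic_integrand m x = (\<lambda>b. cpowr m x * of_real (k b))"
    using assms by (auto simp: elliptic_integrand_def k_def indicator_def)
  have k_int: "integrable lborel k"
    using set_integral_elliptic_kernel_le(1)[OF assms] unfolding set_integrable_def k_def by simp
  have k_nonneg: "0 \<le> k b" for b
    using elliptic_kernel_bound(1)[OF assms zero_le_power2 abs_square_le_1[THEN iffD2], of "sin b"]
    by (simp add: k_def)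
  show "integrable lborel (elliptic_integrand m x)"
    unfolding slice by (intro integrable_mult_right integrable_of_real k_int)
  show "(\<integral>b. elliptic_integrand m x b \<partial>lborel) = cpowr m x * of_real (EllipticK (sqrt x))"
    unfolding slice integral_mult_right_zero integral_complex_of_real
      EllipticK_sqrt_eq_set_integral[OF assms] set_lebesgue_integral_def
    by (simp add: k_def)
  have k_val: "integral\<^sup>L lborel k = (LINT b:{0..pi/2}|lborel. 1 / sqrt (1 - x * (sin b)\<^sup>2))"
    by (simp add: k_def set_lebesgue_integral_def)
  have "norm (elliptic_integrand m x b) = x powr Re m * k b" for b
    unfolding slice
    by (simp only: norm_mult norm_of_real abs_of_nonneg[OF k_nonneg] norm_cpowr_nonneg[OF assms(1)])
  then have "(\<integral>b. norm (elliptic_integrand m x b) \<partial>lborel) = x powr Re m * integral\<^sup>L lborel k"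
    by simp
  also have "\<dots> \<le> x powr Re m * (pi / 2 * (1 - x) powr (-1/2))"
    unfolding k_val by (intro mult_left_mono set_integral_elliptic_kernel_le(2)[OF assms]) auto
  finally show "(\<integral>b. norm (elliptic_integrand m x b) \<partial>lborel) \<le> x powr Re m * (pi / 2 * (1 - x) powr (-1/2))" .
qed

lemma integrable_elliptic_integrand:
  assumes "Re m > -1"
  shows "integrable (lborel \<Otimes>\<^sub>M lborel) (\<lambda>(x, b). elliptic_integrand m x b)"
proof (rule lborel_pair.Fubini_integrable)
  show "AE x in lborel. integrable lborel (\<lambda>y. case (x, y) of (x, b) \<Rightarrow> elliptic_integrand m x b)"
    using AE_lborel_singleton[of 1]
  proof eventually_elim
    case (elim x)
    show ?case
    proof (cases "x \<in> {0..1}")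
      case True
      with elim show ?thesis using elliptic_integrand_x_section(1)[of x m] by simp
    qed (simp add: elliptic_integrand_eq_0)
  qed
  define D where "D = (\<lambda>x. indicator {0..1} x * (x powr Re m * (pi / 2 * (1 - x) powr (-1/2))))"
  have D_int: "integrable lborel D"
    using integrable_Beta[of "Re m + 1" "1/2"] assms unfolding D_def set_integrable_def
    by (simp add: mult_ac integrable_mult_left_iff)
  show "integrable lborel (\<lambda>x. \<integral>y. norm (case (x, y) of (x, b) \<Rightarrow> elliptic_integrand m x b) \<partial>lborel)"
  proof (rule Bochner_Integration.integrable_bound[OF D_int])
    show "AE x in lborel. norm (\<integral>y. norm (case (x, y) of (x, b) \<Rightarrow> elliptic_integrand m x b) \<partial>lborel) \<le> norm (D x)"
      using AE_lborel_singleton[of 1]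
    proof eventually_elim
      case (elim x)
      show ?case
      proof (cases "x \<in> {0..1}")
        case True
        with elim have x: "0 \<le> x" "x < 1" by auto
        show ?thesis
          using elliptic_integrand_x_section(3)[OF x, of m] True by (simp add: D_def)
      qed (simp add: elliptic_integrand_eq_0)
    qed
  qed measurable
qed measurable

lemma has_integral_EllipticK_powr:
  assumes "Re m > -1"
  shows "((\<lambda>x. complex_of_real (EllipticK (sqrt x)) * complex_of_real x powr m) has_integral
           (\<integral>(x, b). elliptic_integrand m x b \<partial>(lborel \<Otimes>\<^sub>M lborel))) {0..1}"
proof -
  note int = integrable_elliptic_integrand[OF assms]
  have "((\<lambda>x. \<integral>b. elliptic_integrand m x b \<partial>lborel) has_integral
          (\<integral>(x, b). elliptic_integrand m x b \<partial>(lborel \<Otimes>\<^sub>M lborel))) UNIV"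
    using has_integral_integral_lborel[OF lborel_pair.integrable_fst[OF int]]
    by (simp add: lborel_pair.integral_fst[OF int])
  then have "((\<lambda>x. if x \<in> {0..1} then complex_of_real (EllipticK (sqrt x)) * complex_of_real x powr m else 0)
      has_integral (\<integral>(x, b). elliptic_integrand m x b \<partial>(lborel \<Otimes>\<^sub>M lborel))) UNIV"
    by (rule has_integral_spike[OF negligible_sing[of 1], rotated])
       (auto simp: elliptic_integrand_x_section(2) elliptic_integrand_eq_0 cpowr_eq_powr mult.commute less_le)
  then show ?thesis by (rule has_integral_restrict_UNIV[THEN iffD1])
qed

lemma elliptic_integrand_series:
  assumes m: "Re m > -1"
  shows "(\<lambda>i. (m gchoose i) * beta_nat m i * of_real (2 / (2 * real i + 1))) sums
           (\<integral>(x, b). elliptic_integrand m x b \<partial>(lborel \<Otimes>\<^sub>M lborel))"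
proof -
  note int = integrable_elliptic_integrand[OF m]
  define c where "c = (\<lambda>i. (m gchoose i) * beta_nat m i)"
  define w where "w = (\<lambda>i b. indicator {0..pi/2} b * (2 / (1 + cos b) * tan_half_sq b ^ i))"
  define f where "f = (\<lambda>i b. c i * of_real (w i b))"
  have w_int: "integrable lborel (w i)" and w_val: "integral\<^sup>L lborel (w i) = 2 / (2 * real i + 1)" for i
    using set_integral_tan_half_sq_power[of i]
    unfolding w_def set_integrable_def set_lebesgue_integral_def by auto
  have w_nonneg: "0 \<le> w i b" for i b
  proof -
    have "0 \<le> 1 + cos b" using cos_ge_minus_one[of b] by linarith
    then show ?thesis unfolding w_def using tan_half_sq_nonneg[of b]
      by (intro mult_nonneg_nonneg divide_nonneg_nonneg zero_le_power) auto
  qed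
  have f_int: "integrable lborel (f i)" for i
    unfolding f_def by (intro integrable_mult_right integrable_of_real w_int)
  have norm_f: "norm (f i b) = norm (c i) * w i b" for i b
    using w_nonneg[of i b] by (simp add: f_def norm_mult)
  have AE_sums: "AE b in lborel. (\<lambda>i. f i b) sums (\<integral>x. elliptic_integrand m x b \<partial>lborel)"
    using AE_lborel_singleton[of "pi/2"]
  proof eventually_elim
    case (elim b)
    show ?case
    proof (cases "b \<in> {0..pi/2}")
      case True
      with elim have b: "0 \<le> b" "b < pi/2" by auto
      have "(\<integral>x. elliptic_integrand m x b \<partial>lborel)
          = (LINT x:{0..1}|lborel. cpowr m x * of_real (1 / sqrt (1 - x * (sin b)\<^sup>2)))"
        using True by (simp add: elliptic_integrand_def set_lebesgue_integral_def)
      then show ?thesis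
        using cpowr_elliptic_kernel_integral_sums[OF m b] True
        by (simp add: f_def c_def w_def)
    qed (simp add: f_def w_def elliptic_integrand_def)
  qed
  have "AE b in lborel. summable (\<lambda>i. norm (f i b))"
    using AE_lborel_singleton[of "pi/2"]
  proof eventually_elim
    case (elim b)
    show ?case
    proof (cases "b \<in> {0..pi/2}")
      case True
      with elim have "0 < cos b" by (intro cos_gt_zero_pi) auto
      then have "summable (\<lambda>i. 2 / (1 + cos b) * (norm (c i) * tan_half_sq b ^ i))"
        unfolding c_def
        by (intro summable_mult summable_norm_gchoose_beta_nat_geometric m)
           (simp_all add: tan_half_sq_nonneg tan_half_sq_less_one)
      then show ?thesis using True by (simp add: norm_f w_def mult_ac)
    qed (simp add: f_def w_def)
  qed
  moreover have "summable (\<lambda>i. \<integral>b. norm (f i b) \<partial>lborel)"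
    using summable_norm_gchoose_beta_nat_moment[OF m]
    by (simp add: norm_f w_val c_def)
  ultimately have sum_int: "integrable lborel (\<lambda>b. \<Sum>i. f i b)"
    and "(\<lambda>i. integral\<^sup>L lborel (f i)) sums (\<integral>b. (\<Sum>i. f i b) \<partial>lborel)"
    using integrable_suminf sums_integral f_int by blast+
  moreover have "(\<integral>b. (\<Sum>i. f i b) \<partial>lborel) = (\<integral>b. (\<integral>x. elliptic_integrand m x b \<partial>lborel) \<partial>lborel)"
    using AE_sums
    by (intro integral_cong_AE borel_measurable_integrable[OF sum_int]
        borel_measurable_integrable[OF lborel_pair.integrable_snd[OF int]])
       (auto elim!: eventually_mono simp: sums_iff)
  ultimately show ?thesis by (simp add: f_def c_def w_val lborel_pair.integral_snd[OF int])
qed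

theorem mainTheorem1:
  fixes m :: complex
  assumes "Re m > -1"
  shows "summable (\<lambda>i::nat. Gamma (m + 1) ^ 2 * rGamma (m - of_nat i + 1) * rGamma (m + of_nat i + 2)
                               / of_nat (2 * i + 1))
       \<and> ((\<lambda>x::real. complex_of_real (EllipticK (sqrt x)) * (complex_of_real x) powr m) has_integral
           2 * (\<Sum>i. Gamma (m + 1) ^ 2 * rGamma (m - of_nat i + 1) * rGamma (m + of_nat i + 2)
                     / of_nat (2 * i + 1))) {0..1}"
proof -
  define G where "G = (\<lambda>i::nat. Gamma (m + 1) ^ 2 * rGamma (m - of_nat i + 1) * rGamma (m + of_nat i + 2)
                      / of_nat (2 * i + 1))"
  let ?I = "\<integral>(x, b). elliptic_integrand m x b \<partial>(lborel \<Otimes>\<^sub>M lborel)"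
  have "(m gchoose i) * beta_nat m i * of_real (2 / (2 * real i + 1)) = 2 * G i" for i
    unfolding gbinomial_beta_nat_eq_Gamma[OF assms] G_def by (simp add: field_simps)
  then have "(\<lambda>i. 2 * G i) sums ?I"
    using elliptic_integrand_series[OF assms] by simp
  from sums_divide[OF this, of 2] have "G sums (?I / 2)"
    by simp
  then have "summable G" and "?I = 2 * suminf G"
    by (auto simp: sums_iff mult.commute)
  with has_integral_EllipticK_powr[OF assms] show ?thesis
    unfolding G_def[symmetric] by simp
qed

end
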